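(* Let $n\ge3$, $0<\ell\le m$, and let $J$ be a real symmetric diagonally balanced $n\times n$ matrix with $\ell\le J_{ij}\le m$ for all $i\ne j$. For $1\le i\le n$ let $J_{(i)}$ be the lower-right $(n-i+1)\times(n-i+1)$ principal submatrix of $J$ (rows and columns $i,\dots,n$), with eigenvalues $\lambda_1\le\dots\le\lambda_{n-i+1}$. Then $$(n-2)\ell\le\lambda_j\le(n-2)m\ \ (1\le j\le n-i),\qquad (2n-i-1)\ell\le\lambda_{n-i+1}\le(2n-i-1)m.$$ If $J$ is only assumed diagonally dominant (with $\ell\le J_{ij}\le m$ for $i\ne j$), the lower bounds still hold.
   Context: For a real $n\times n$ matrix $J$, $\Delta_i(J)=|J_{ii}|-\sum_{j\ne i}|J_{ij}|$; $J$ is diagonally dominant if $\Delta_i(J)\ge0$ for all $i$ and diagonally balanced if $\Delta_i(J)=0$ for all $i$. *)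

theory Defs
  imports "Jordan_Normal_Form.Char_Poly"
begin

definition row_excess :: "real mat \<Rightarrow> nat \<Rightarrow> real" where
  "row_excess J i = \<bar>J $$ (i,i)\<bar> - (\<Sum>j\<in>{0..<dim_col J} - {i}. \<bar>J $$ (i,j)\<bar>)"

definition diag_dominant :: "real mat \<Rightarrow> bool" where
  "diag_dominant J \<longleftrightarrow> (\<forall>i<dim_row J. row_excess J i \<ge> 0)"

definition diag_balanced :: "real mat \<Rightarrow> bool" where
  "diag_balanced J \<longleftrightarrow> (\<forall>i<dim_row J. row_excess J i = 0)"

(* J_(i): lower-right principal submatrix on rows/columns i..n (1-based i) *)
definition lower_right :: "real mat \<Rightarrow> nat \<Rightarrow> real mat" where
  "lower_right J i = mat (dim_row J - i + 1) (dim_row J - i + 1)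
     (\<lambda>(a,b). J $$ (a + i - 1, b + i - 1))"

(* es is the list of eigenvalues of A (with algebraic multiplicity), in increasing order *)
definition sorted_eigenvalues :: "real mat \<Rightarrow> real list \<Rightarrow> bool" where
  "sorted_eigenvalues A es \<longleftrightarrow> sorted es \<and> char_poly A = (\<Prod>a\<leftarrow>es. [:- a, 1:])"

end

theory Submission
  imports Defs "Jordan_Normal_Form.Schur_Decomposition"
begin

text \<open>Let \<open>A\<close> be the block of \<open>J\<close> on rows and columns \<open>i, \<dots>, n\<close>, of size \<open>k = n - i + 1\<close>.
  Each row of \<open>A\<close> loses \<open>i - 1\<close> off-diagonal entries of the corresponding row of \<open>J\<close>, so if \<open>J\<close>
  is dominant then \<open>A - (n-2)l I - l E\<close> (\<open>E\<close> the all-ones matrix) is diagonally dominant with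
  nonnegative diagonal, hence positive semidefinite: \<open>x\<^sup>T A x \<ge> (n-2)l |x|\<^sup>2 + l (\<Sum>x)\<^sup>2\<close>.
  At a unit eigenvector this gives \<open>\<lambda> \<ge> (n-2)l\<close>; at the all-ones vector, combined with
  \<open>x\<^sup>T A x \<le> \<lambda>\<^sub>m\<^sub>a\<^sub>x |x|\<^sup>2\<close>, it gives \<open>\<lambda>\<^sub>m\<^sub>a\<^sub>x \<ge> (2n-i-1)l\<close>. If \<open>J\<close> is balanced then
  \<open>(n-2)m I + m E - A\<close> is positive semidefinite in the same way. The hyperplane \<open>\<Sum>x = 0\<close> meets
  the span of the two top eigenvectors, which bounds the second largest eigenvalue by \<open>(n-2)m\<close>;
  Cauchy-Schwarz, \<open>(\<Sum>x)\<^sup>2 \<le> k |x|\<^sup>2\<close>, bounds the largest by \<open>(2n-i-1)m\<close>.\<close>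

section \<open>Quadratic forms of diagonally dominant matrices\<close>


lemma quadratic_form_sum:
  fixes A :: "'a :: comm_ring mat"
  assumes "A \<in> carrier_mat k k" and "x \<in> carrier_vec k"
  shows "x \<bullet> (A *\<^sub>v x) = (\<Sum>a<k. \<Sum>b<k. A $$ (a,b) * x $ a * x $ b)"
  using assms by (simp add: scalar_prod_def sum_distrib_left atLeast0LessThan ac_simps)

lemma sum_offdiag_swap:
  fixes f :: "nat \<Rightarrow> nat \<Rightarrow> 'a :: comm_monoid_add"
  shows "(\<Sum>a<k. \<Sum>b\<in>{..<k}-{a}. f a b) = (\<Sum>a<k. \<Sum>b\<in>{..<k}-{a}. f b a)"
proof -
  have "(\<Sum>a<k. \<Sum>b\<in>{..<k}-{a}. f a b) = (\<Sum>a<k. \<Sum>b<k. if a = b then 0 else f a b)"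
    by (intro sum.cong refl sum.mono_neutral_cong_left) auto
  also have "\<dots> = (\<Sum>b<k. \<Sum>a<k. if a = b then 0 else f a b)"
    by (rule sum.swap)
  also have "\<dots> = (\<Sum>a<k. \<Sum>b\<in>{..<k}-{a}. f b a)"
    by (intro sum.cong refl sum.mono_neutral_cong_right) auto
  finally show ?thesis .
qed

lemma sum_two_support:
  fixes g :: "nat \<Rightarrow> 'a :: comm_monoid_add"
  assumes "a < k" "b < k" "a \<noteq> b" "\<And>j. j < k \<Longrightarrow> j \<noteq> a \<Longrightarrow> j \<noteq> b \<Longrightarrow> g j = 0"
  shows "(\<Sum>j<k. g j) = g a + g b"
proof -
  have "(\<Sum>j<k. g j) = (\<Sum>j\<in>{a,b}. g j)"
    by (rule sum.mono_neutral_right) (use assms in auto)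
  thus ?thesis using assms(3) by simp
qed

lemma square_sum_le_card_times_sum_squares:
  fixes y :: "nat \<Rightarrow> real"
  shows "(\<Sum>a<k. y a)^2 \<le> real k * (\<Sum>a<k. (y a)^2)"
proof -
  have "0 \<le> (\<Sum>a<k. \<Sum>b<k. (y a - y b)^2)" by (intro sum_nonneg) auto
  also have "\<dots> = 2 * (real k * (\<Sum>a<k. (y a)^2)) - 2 * (\<Sum>a<k. y a)^2"
    by (simp add: power2_diff sum_subtractf sum.distrib sum_distrib_left sum_distrib_right
        power2_eq_square sum_product algebra_simps)
  finally show ?thesis by simp
qed

lemma ones_scalar_prod:
  "x \<in> carrier_vec k \<Longrightarrow> vec k (\<lambda>_. 1) \<bullet> x = (\<Sum>a<k. x $ a :: 'a :: comm_ring_1)"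
  by (simp add: scalar_prod_def atLeast0LessThan)

lemma exists_nontrivial_orthogonal_pair:
  fixes a b :: real
  obtains \<alpha> \<beta> where "\<alpha> * a + \<beta> * b = 0" and "0 < \<alpha>^2 + \<beta>^2"
proof (cases "a = 0 \<and> b = 0")
  case True thus ?thesis using that[of 1 0] by simp
next
  case False thus ?thesis
    using that[of b "- a"] by (auto simp: algebra_simps sum_power2_gt_zero_iff)
qed

lemma neg_abs_sum_squares_le_mult:
  fixes c u v :: real
  shows "- (\<bar>c\<bar> * u^2 + \<bar>c\<bar> * v^2) \<le> 2 * (c * u * v)"
proof -
  have "2 * \<bar>u\<bar> * \<bar>v\<bar> \<le> u^2 + v^2" using sum_squares_bound[of "\<bar>u\<bar>" "\<bar>v\<bar>"] by simp
  hence "\<bar>c\<bar> * (2 * \<bar>u\<bar> * \<bar>v\<bar>) \<le> \<bar>c\<bar> * (u^2 + v^2)" by (rule mult_left_mono) simp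
  moreover have "- (c * u * v) \<le> \<bar>c\<bar> * \<bar>u\<bar> * \<bar>v\<bar>" by (simp add: abs_mult[symmetric])
  ultimately show ?thesis by (simp add: algebra_simps)
qed

lemma diag_dominant_quadratic_form_nonneg:
  fixes A :: "real mat"
  assumes A: "A \<in> carrier_mat k k" and sym: "transpose_mat A = A" and dom: "diag_dominant A"
    and diag: "\<forall>a<k. 0 \<le> A $$ (a,a)" and x: "x \<in> carrier_vec k"
  shows "0 \<le> x \<bullet> (A *\<^sub>v x)"
proof -
  have Asym: "A $$ (b,a) = A $$ (a,b)" if "a < k" "b < k" for a b
    using that A by (metis carrier_matD index_transpose_mat(1) sym)
  have row_le: "(\<Sum>b\<in>{..<k}-{a}. \<bar>A $$ (a,b)\<bar>) \<le> A $$ (a,a)" if "a < k" for a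
    using dom that A diag by (simp add: diag_dominant_def row_excess_def atLeast0LessThan)
  let ?D = "\<Sum>a<k. A $$ (a,a) * (x $ a)^2"
  let ?C = "\<Sum>a<k. \<Sum>b\<in>{..<k}-{a}. A $$ (a,b) * x $ a * x $ b"
  let ?S = "\<Sum>a<k. \<Sum>b\<in>{..<k}-{a}. \<bar>A $$ (a,b)\<bar> * (x $ a)^2"
  have "x \<bullet> (A *\<^sub>v x) = ?D + ?C"
    unfolding quadratic_form_sum[OF A x] sum.distrib[symmetric]
  proof (intro sum.cong refl)
    fix a assume "a \<in> {..<k}"
    thus "(\<Sum>b<k. A $$ (a,b) * x $ a * x $ b)
        = A $$ (a,a) * (x $ a)^2 + (\<Sum>b\<in>{..<k}-{a}. A $$ (a,b) * x $ a * x $ b)"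
      by (subst sum.remove[of _ a]) (auto simp: power2_eq_square)
  qed
  moreover have "- (\<Sum>a<k. \<Sum>b\<in>{..<k}-{a}. \<bar>A $$ (a,b)\<bar> * (x $ a)^2 + \<bar>A $$ (a,b)\<bar> * (x $ b)^2)
      \<le> 2 * ?C"
    unfolding sum_distrib_left sum_negf[symmetric]
    by (intro sum_mono neg_abs_sum_squares_le_mult)
  moreover have "(\<Sum>a<k. \<Sum>b\<in>{..<k}-{a}. \<bar>A $$ (a,b)\<bar> * (x $ a)^2 + \<bar>A $$ (a,b)\<bar> * (x $ b)^2)
      = 2 * ?S"
    unfolding sum.distrib sum_offdiag_swap[of "\<lambda>a b. \<bar>A $$ (a,b)\<bar> * (x $ b)^2"]
    by (simp add: Asym)
  moreover have "?S \<le> ?D"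
    unfolding sum_distrib_right[symmetric] by (intro sum_mono mult_right_mono row_le) auto
  ultimately show ?thesis by linarith
qed

lemma quadratic_form_lower_bound:
  fixes A :: "real mat"
  assumes A: "A \<in> carrier_mat k k" and sym: "transpose_mat A = A"
    and off: "\<forall>a<k. \<forall>b<k. a \<noteq> b \<longrightarrow> l \<le> A $$ (a,b)"
    and excess: "\<forall>a<k. d \<le> A $$ (a,a) - (\<Sum>b\<in>{..<k}-{a}. A $$ (a,b))"
    and x: "x \<in> carrier_vec k"
  shows "(d + (real k - 2) * l) * (x \<bullet> x) + l * (\<Sum>a<k. x $ a)^2 \<le> x \<bullet> (A *\<^sub>v x)"
proof -
  define c where "c = d + (real k - 2) * l"
  \<comment> \<open>the largest shift keeping \<open>A - c I - l E\<close> diagonally dominant\<close>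
  define N where "N = mat k k (\<lambda>(a,b). A $$ (a,b) - l - (if a = b then c else 0))"
  have N: "N \<in> carrier_mat k k" by (simp add: N_def)
  have Nsym: "transpose_mat N = N"
  proof (rule eq_matI)
    fix a b assume "a < dim_row N" "b < dim_col N"
    moreover have "A $$ (b,a) = A $$ (a,b)" if "a < k" "b < k"
      using that A by (metis carrier_matD index_transpose_mat(1) sym)
    ultimately show "transpose_mat N $$ (a,b) = N $$ (a,b)" by (auto simp: N_def)
  qed (auto simp: N_def)
  have N_offdiag: "(\<Sum>b\<in>{..<k}-{a}. \<bar>N $$ (a,b)\<bar>) = (\<Sum>b\<in>{..<k}-{a}. A $$ (a,b)) - (real k - 1) * l"
    if "a < k" for a
  proof -
    have "(\<Sum>b\<in>{..<k}-{a}. \<bar>N $$ (a,b)\<bar>) = (\<Sum>b\<in>{..<k}-{a}. A $$ (a,b) - l)"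
      using that off by (intro sum.cong refl) (auto simp: N_def)
    thus ?thesis using that by (simp add: sum_subtractf of_nat_diff)
  qed
  have N_diag: "(\<Sum>b\<in>{..<k}-{a}. \<bar>N $$ (a,b)\<bar>) \<le> N $$ (a,a)" if "a < k" for a
    using N_offdiag[OF that] excess that by (simp add: N_def c_def algebra_simps)
  have "diag_dominant N" and "\<forall>a<k. 0 \<le> N $$ (a,a)"
    using N_diag order_trans[OF sum_nonneg N_diag] N
    by (force simp: diag_dominant_def row_excess_def atLeast0LessThan)+
  hence "0 \<le> x \<bullet> (N *\<^sub>v x)"
    using diag_dominant_quadratic_form_nonneg[OF N Nsym _ _ x] by blast
  also have "x \<bullet> (N *\<^sub>v x) = x \<bullet> (A *\<^sub>v x) - l * (\<Sum>a<k. x $ a)^2 - c * (x \<bullet> x)"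
  proof -
    have "(\<Sum>a<k. \<Sum>b<k. (if a = b then c else 0) * x $ a * x $ b) = c * (x \<bullet> x)"
    proof -
      have "(\<Sum>b<k. (if a = b then c else 0) * x $ a * x $ b) = c * (x $ a * x $ a)" if "a < k" for a
        using that by (simp add: if_distrib[of "\<lambda>t. t * _"] sum.delta cong: if_cong)
      thus ?thesis using x by (simp add: scalar_prod_def sum_distrib_left atLeast0LessThan)
    qed
    thus ?thesis
      unfolding quadratic_form_sum[OF N x] quadratic_form_sum[OF A x]
      by (simp add: N_def algebra_simps sum_subtractf sum_distrib_left power2_eq_square sum_product)
  qed
  finally show ?thesis by (simp add: c_def)
qed

lemma quadratic_form_upper_bound:
  fixes A :: "real mat"
  assumes A: "A \<in> carrier_mat k k" and sym: "transpose_mat A = A"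
    and off: "\<forall>a<k. \<forall>b<k. a \<noteq> b \<longrightarrow> A $$ (a,b) \<le> m"
    and excess: "\<forall>a<k. A $$ (a,a) - (\<Sum>b\<in>{..<k}-{a}. A $$ (a,b)) \<le> d"
    and x: "x \<in> carrier_vec k"
  shows "x \<bullet> (A *\<^sub>v x) \<le> (d + (real k - 2) * m) * (x \<bullet> x) + m * (\<Sum>a<k. x $ a)^2"
proof -
  have "- A \<in> carrier_mat k k" and "transpose_mat (- A) = - A"
    using A sym by (auto simp: transpose_uminus)
  moreover have "\<forall>a<k. \<forall>b<k. a \<noteq> b \<longrightarrow> - m \<le> (- A) $$ (a,b)"
    and "\<forall>a<k. - d \<le> (- A) $$ (a,a) - (\<Sum>b\<in>{..<k}-{a}. (- A) $$ (a,b))"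
    using A off excess by (auto simp: sum_negf)
  ultimately have "(- d + (real k - 2) * - m) * (x \<bullet> x) + - m * (\<Sum>a<k. x $ a)^2
      \<le> x \<bullet> ((- A) *\<^sub>v x)"
    by (rule quadratic_form_lower_bound[OF _ _ _ _ x])
  thus ?thesis using A x by (simp add: algebra_simps)
qed

section \<open>Orthogonal diagonalisation of real symmetric matrices\<close>

definition orthogonal_mat :: "nat \<Rightarrow> real mat \<Rightarrow> bool" where
  "orthogonal_mat k Q \<longleftrightarrow> Q \<in> carrier_mat k k \<and> transpose_mat Q * Q = 1\<^sub>m k"

lemma orthogonal_matD:
  assumes "orthogonal_mat k Q"
  shows "Q \<in> carrier_mat k k" "transpose_mat Q * Q = 1\<^sub>m k" "Q * transpose_mat Q = 1\<^sub>m k"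
  using assms mat_mult_left_right_inverse[of "transpose_mat Q" k Q]
  by (auto simp: orthogonal_mat_def)

lemma orthogonal_mat_mult:
  assumes P: "orthogonal_mat k P" and Q: "orthogonal_mat k Q"
  shows "orthogonal_mat k (P * Q)"
proof -
  have [simp]: "P \<in> carrier_mat k k" "Q \<in> carrier_mat k k"
    "transpose_mat P \<in> carrier_mat k k" "transpose_mat Q \<in> carrier_mat k k"
    using P Q by (auto dest: orthogonal_matD)
  have "transpose_mat (P * Q) * (P * Q) = transpose_mat Q * (transpose_mat P * (P * Q))"
    using assoc_mult_mat[of "transpose_mat Q" k k "transpose_mat P" k "P * Q" k]
    by (simp add: transpose_mult[of _ k k _ k] mult_carrier_mat[of _ k k _ k])
  also have "transpose_mat P * (P * Q) = transpose_mat P * P * Q"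
    by (rule assoc_mult_mat[symmetric, of _ k k _ k _ k]) simp_all
  also have "\<dots> = Q"
    unfolding orthogonal_matD(2)[OF P] by (rule left_mult_one_mat[OF orthogonal_matD(1)[OF Q]])
  finally show ?thesis
    unfolding orthogonal_mat_def using orthogonal_matD(2)[OF Q]
    by (simp add: mult_carrier_mat[of _ k k _ k])
qed

lemma orthogonal_mat_of_normalized_cols:
  assumes ws: "set ws \<subseteq> carrier_vec k" "corthogonal ws" "length ws = k"
  shows "orthogonal_mat k (mat_of_cols k (map (\<lambda>w. (1 / sqrt (w \<bullet> w)) \<cdot>\<^sub>v w) ws))"
    (is "orthogonal_mat k ?W")
proof -
  have carr: "ws ! i \<in> carrier_vec k" if "i < k" for i using that ws by auto
  have orth: "(ws ! i \<bullet> ws ! j = 0) = (i \<noteq> j)" if "i < k" "j < k" for i j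
    using corthogonalD[OF ws(2), of i j] that ws(3) by simp
  have pos: "ws ! i \<bullet> ws ! i > 0" if "i < k" for i
    using orth[OF that that] conjugate_square_ge_0_vec[of "ws ! i"] by (simp add: less_le)
  have "col ?W i \<bullet> col ?W j = (if i = j then 1 else 0)" if i: "i < k" and j: "j < k" for i j
  proof -
    have "col ?W i \<bullet> col ?W j
        = (1 / sqrt (ws ! i \<bullet> ws ! i)) * (1 / sqrt (ws ! j \<bullet> ws ! j)) * (ws ! i \<bullet> ws ! j)"
      using i j carr[OF i] carr[OF j] ws(3)
      by (simp add: col_mat_of_cols scalar_prod_smult_distrib smult_scalar_prod_distrib)
    thus ?thesis using orth[OF i j] pos[OF i]
      by (cases "i = j") (auto simp: real_sqrt_mult[symmetric] simp del: real_sqrt_mult)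
  qed
  moreover have "?W \<in> carrier_mat k k" using ws(3) by (simp add: mat_of_cols_def)
  ultimately show ?thesis
    unfolding orthogonal_mat_def by (auto intro!: eq_matI)
qed

lemma unit_vec_orthogonal_completion:
  fixes u :: "real vec"
  assumes u: "u \<in> carrier_vec k" and u1: "u \<bullet> u = 1"
  shows "\<exists>W. orthogonal_mat k W \<and> col W 0 = u"
proof -
  interpret cof_vec_space k "TYPE(real)" .
  have u0: "u \<noteq> 0\<^sub>v k" using u1 u by auto
  hence k0: "k \<noteq> 0" using u by auto
  define b where "b = basis_completion u"
  from basis_completion[OF u u0, folded b_def]
  have b: "distinct b" "\<not> lin_dep (set b)" "set b \<subseteq> carrier_vec k" "hd b = u" "length b = k"
    by auto
  then obtain vs where bv: "b = u # vs" using k0 by (cases b) auto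
  define ws where "ws = gram_schmidt k b"
  from gram_schmidt_result[OF b(3,1,2) refl, folded ws_def]
  have ws: "set ws \<subseteq> carrier_vec k" "corthogonal ws" "length ws = k" by (auto simp: b(5))
  have "ws ! 0 = u"
    using gram_schmidt_hd[OF u, of vs] k0 ws(3) unfolding ws_def bv
    by (cases "gram_schmidt k (u # vs)") auto
  hence "col (mat_of_cols k (map (\<lambda>w. (1 / sqrt (w \<bullet> w)) \<cdot>\<^sub>v w) ws)) 0 = u"
    using k0 ws u u1 by (subst col_mat_of_cols) auto
  thus ?thesis using orthogonal_mat_of_normalized_cols[OF ws] by blast
qed

lemma transpose_congruence_symmetric:
  fixes A W :: "real mat"
  assumes A: "A \<in> carrier_mat k k" and sym: "transpose_mat A = A" and W: "W \<in> carrier_mat k k"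
  shows "transpose_mat (transpose_mat W * A * W) = transpose_mat W * A * W"
  using A W sym
  by (simp add: transpose_mult[of _ k k _ k] assoc_mult_mat[of _ k k _ k _ k])

lemma orthogonal_congruence_similar:
  fixes A W :: "real mat"
  assumes W: "orthogonal_mat k W" and A: "A \<in> carrier_mat k k"
  shows "similar_mat A (transpose_mat W * A * W)"
proof -
  have Wc: "W \<in> carrier_mat k k" "transpose_mat W \<in> carrier_mat k k" using W by (auto dest: orthogonal_matD)
  have "W * (transpose_mat W * A * W) * transpose_mat W
      = (W * transpose_mat W) * A * (W * transpose_mat W)"
    using Wc A by (simp add: assoc_mult_mat[of _ k k _ k _ k])
  hence "A = W * (transpose_mat W * A * W) * transpose_mat W"
    using A orthogonal_matD(3)[OF W] by simp
  thus ?thesis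
    unfolding similar_mat_def similar_mat_wit_def Let_def
    using Wc A orthogonal_matD(2,3)[OF W]
    by (intro exI[of _ W] exI[of _ "transpose_mat W"]) auto
qed

lemma orthogonal_congruence_eigenvector_col:
  fixes A W :: "real mat"
  assumes A: "A \<in> carrier_mat k k" and W: "orthogonal_mat k W"
    and col0: "col W 0 = u" and Au: "A *\<^sub>v u = e \<cdot>\<^sub>v u" and i: "i < k"
  shows "(transpose_mat W * A * W) $$ (i, 0) = (if i = 0 then e else 0)"
proof -
  have Wc: "W \<in> carrier_mat k k" and WTW: "transpose_mat W * W = 1\<^sub>m k"
    using W by (auto dest: orthogonal_matD)
  have k0: "0 < k" using i by simp
  have u: "u \<in> carrier_vec k" unfolding col0[symmetric] using Wc k0 by simp
  have "transpose_mat W * A * W = transpose_mat W * (A * W)"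
    using A Wc by (simp add: assoc_mult_mat[of _ k k _ k _ k])
  hence "(transpose_mat W * A * W) $$ (i, 0) = row (transpose_mat W) i \<bullet> (A *\<^sub>v col W 0)"
    using A Wc i k0 by (simp add: mult_mat_vec_def)
  also have "\<dots> = e * (row (transpose_mat W) i \<bullet> col W 0)"
    using Au col0 Wc i u by (simp add: scalar_prod_smult_distrib[of _ k])
  also have "row (transpose_mat W) i \<bullet> col W 0 = (transpose_mat W * W) $$ (i, 0)"
    using Wc i k0 by simp
  finally show ?thesis using WTW i k0 by simp
qed

lemma eigenvalue_unit_eigenvector:
  fixes A :: "real mat"
  assumes A: "A \<in> carrier_mat k k" and ev: "eigenvalue A e"
  shows "\<exists>u\<in>carrier_vec k. u \<bullet> u = 1 \<and> A *\<^sub>v u = e \<cdot>\<^sub>v u"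
proof -
  obtain v where v: "v \<in> carrier_vec k" "v \<noteq> 0\<^sub>v k" "A *\<^sub>v v = e \<cdot>\<^sub>v v"
    using ev A unfolding eigenvalue_def eigenvector_def by auto
  have vpos: "0 < v \<bullet> v" using conjugate_square_greater_0_vec[of v] v by simp
  define u where "u = (1 / sqrt (v \<bullet> v)) \<cdot>\<^sub>v v"
  have "u \<in> carrier_vec k" using v by (simp add: u_def)
  moreover have "u \<bullet> u = 1" using vpos v
    by (simp add: u_def scalar_prod_smult_distrib smult_scalar_prod_distrib)
  moreover have "A *\<^sub>v u = e \<cdot>\<^sub>v u" unfolding u_def using A v
    by (simp add: mult_mat_vec smult_smult_assoc mult.commute)
  ultimately show ?thesis by blast
qed

lemma symmetric_deflation:
  fixes A :: "real mat"
  assumes A: "A \<in> carrier_mat k k" and sym: "transpose_mat A = A" and ev: "eigenvalue A e"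
  shows "\<exists>W A3. orthogonal_mat k W \<and> A3 \<in> carrier_mat (k-1) (k-1) \<and> transpose_mat A3 = A3 \<and>
    transpose_mat W * A * W = four_block_mat (mat 1 1 (\<lambda>_. e)) (0\<^sub>m 1 (k-1)) (0\<^sub>m (k-1) 1) A3"
proof -
  obtain u where u: "u \<in> carrier_vec k" and u1: "u \<bullet> u = 1" and Au: "A *\<^sub>v u = e \<cdot>\<^sub>v u"
    using eigenvalue_unit_eigenvector[OF A ev] by blast
  have "u \<noteq> 0\<^sub>v k" using u u1 by auto
  hence k0: "k \<noteq> 0" using u by auto
  obtain W where W: "orthogonal_mat k W" and col0: "col W 0 = u"
    using unit_vec_orthogonal_completion[OF u u1] by blast
  have Wc: "W \<in> carrier_mat k k" using W by (rule orthogonal_matD)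
  define A' where "A' = transpose_mat W * A * W"
  have A': "A' \<in> carrier_mat k k" using Wc A by (simp add: A'_def)
  have symA': "transpose_mat A' = A'"
    unfolding A'_def by (rule transpose_congruence_symmetric[OF A sym Wc])
  have col: "A' $$ (i, 0) = (if i = 0 then e else 0)" if "i < k" for i
    unfolding A'_def by (rule orthogonal_congruence_eigenvector_col[OF A W col0 Au that])
  have row: "A' $$ (0, j) = (if j = 0 then e else 0)" if "j < k" for j
  proof -
    have "A' $$ (0, j) = transpose_mat A' $$ (j, 0)" using A' that k0 by simp
    thus ?thesis using symA' col[OF that] by simp
  qed
  define A3 where "A3 = mat (k-1) (k-1) (\<lambda>(i,j). A' $$ (Suc i, Suc j))"
  have "transpose_mat A3 = A3"
  proof (rule eq_matI)
    fix i j assume "i < dim_row A3" "j < dim_col A3"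
    hence "Suc i < k" "Suc j < k" by (auto simp: A3_def)
    hence "A' $$ (Suc j, Suc i) = transpose_mat A' $$ (Suc i, Suc j)" using A' by simp
    thus "transpose_mat A3 $$ (i, j) = A3 $$ (i, j)" using symA' \<open>Suc i < k\<close> \<open>Suc j < k\<close>
      by (simp add: A3_def)
  qed (auto simp: A3_def)
  moreover have "A' = four_block_mat (mat 1 1 (\<lambda>_. e)) (0\<^sub>m 1 (k-1)) (0\<^sub>m (k-1) 1) A3"
    using A' k0 col row by (auto intro!: eq_matI simp: A3_def)
  ultimately show ?thesis
    using W unfolding A'_def by (intro exI[of _ W] exI[of _ A3]) (auto simp: A3_def)
qed

lemma orthogonal_block_extension:
  fixes Q3 :: "real mat"
  assumes Q3: "orthogonal_mat (k-1) Q3" and k0: "k \<noteq> 0"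
    and A1: "A1 \<in> carrier_mat 1 1" and A3: "A3 \<in> carrier_mat (k-1) (k-1)"
  defines "B \<equiv> four_block_mat (1\<^sub>m 1) (0\<^sub>m 1 (k-1)) (0\<^sub>m (k-1) 1) Q3"
  shows "orthogonal_mat k B"
    and "transpose_mat B * four_block_mat A1 (0\<^sub>m 1 (k-1)) (0\<^sub>m (k-1) 1) A3 * B
         = four_block_mat A1 (0\<^sub>m 1 (k-1)) (0\<^sub>m (k-1) 1) (transpose_mat Q3 * A3 * Q3)"
proof -
  have Q3c: "Q3 \<in> carrier_mat (k-1) (k-1)" and Q3TQ3: "transpose_mat Q3 * Q3 = 1\<^sub>m (k-1)"
    using Q3 by (auto dest: orthogonal_matD)
  have BT: "transpose_mat B = four_block_mat (1\<^sub>m 1) (0\<^sub>m 1 (k-1)) (0\<^sub>m (k-1) 1) (transpose_mat Q3)"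
    unfolding B_def using Q3c by (subst transpose_four_block_mat) auto
  have blocks: "1\<^sub>m 1 \<in> carrier_mat 1 1" "0\<^sub>m 1 (k-1) \<in> carrier_mat 1 (k-1)"
    "0\<^sub>m (k-1) 1 \<in> carrier_mat (k-1) 1" "transpose_mat Q3 \<in> carrier_mat (k-1) (k-1)"
    using Q3c by auto
  have "B \<in> carrier_mat k k"
    using four_block_carrier_mat[of "1\<^sub>m 1" 1 1 Q3 "k-1" "k-1" "0\<^sub>m 1 (k-1)" "0\<^sub>m (k-1) 1"] Q3c k0
    by (simp add: B_def)
  moreover have "transpose_mat B * B = 1\<^sub>m k"
    unfolding BT unfolding B_def
    using mult_four_block_mat[OF blocks blocks(1-3) Q3c] Q3c Q3TQ3 four_block_one_mat[of 1 "k-1"] k0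
    by simp
  ultimately show "orthogonal_mat k B" by (simp add: orthogonal_mat_def)
  show "transpose_mat B * four_block_mat A1 (0\<^sub>m 1 (k-1)) (0\<^sub>m (k-1) 1) A3 * B
      = four_block_mat A1 (0\<^sub>m 1 (k-1)) (0\<^sub>m (k-1) 1) (transpose_mat Q3 * A3 * Q3)"
    unfolding BT unfolding B_def
    by (subst mult_four_block_mat[OF blocks A1 blocks(2,3) A3],
        subst mult_four_block_mat[of _ 1 1 _ "k-1" _ "k-1" _ _ 1 _ "k-1"])
      (use Q3c A1 A3 in auto)
qed

lemma length_eigenvalues:
  fixes A :: "'a :: idom mat"
  assumes "A \<in> carrier_mat k k" and "char_poly A = (\<Prod>e\<leftarrow>es. [:- e, 1:])"
  shows "length es = k"
proof -
  have "degree (\<Prod>e\<leftarrow>es. [:- e, 1:]) = length es"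
    by (subst degree_prod_list_eq) (auto simp: o_def sum_list_triv)
  thus ?thesis using degree_monic_char_poly[OF assms(1)] assms(2) by simp
qed

theorem symmetric_orthogonal_diagonalization:
  fixes A :: "real mat"
  assumes "A \<in> carrier_mat k k" and "transpose_mat A = A"
    and "char_poly A = (\<Prod>e\<leftarrow>es. [:- e, 1:])"
  shows "\<exists>Q. orthogonal_mat k Q \<and> transpose_mat Q * A * Q = mat_diag k (\<lambda>j. es ! j)"
  using assms
proof (induction es arbitrary: k A)
  case Nil
  hence "k = 0" using degree_monic_char_poly[OF Nil(1)] by simp
  thus ?case by (intro exI[of _ "1\<^sub>m 0"]) (auto intro!: eq_matI simp: orthogonal_mat_def mat_diag_def)
next
  case (Cons e es k A)
  have A: "A \<in> carrier_mat k k" by fact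
  have "eigenvalue A e" using Cons.prems(3) by (simp add: eigenvalue_root_char_poly[OF A])
  then obtain W A3 where W: "orthogonal_mat k W" and A3: "A3 \<in> carrier_mat (k-1) (k-1)"
    and symA3: "transpose_mat A3 = A3"
    and WAW: "transpose_mat W * A * W
      = four_block_mat (mat 1 1 (\<lambda>_. e)) (0\<^sub>m 1 (k-1)) (0\<^sub>m (k-1) 1) A3"
    using symmetric_deflation[OF A Cons.prems(2)] by blast
  have k0: "k \<noteq> 0"
    using length_eigenvalues[OF A Cons.prems(3)] by simp
  have "char_poly A = char_poly (transpose_mat W * A * W)"
    by (rule char_poly_similar[OF orthogonal_congruence_similar[OF W A]])
  also have "\<dots> = [:- e, 1:] * char_poly A3"
    unfolding WAW by (subst char_poly_four_block_zeros_col[OF _ _ A3])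
      (auto simp: char_poly_defs det_def sign_def)
  finally have "[:- e, 1:] * char_poly A3 = [:- e, 1:] * (\<Prod>e\<leftarrow>es. [:- e, 1:])"
    using Cons.prems(3) by simp
  hence "char_poly A3 = (\<Prod>e\<leftarrow>es. [:- e, 1:])"
    by (subst (asm) mult_left_cancel) auto
  then obtain Q3 where Q3: "orthogonal_mat (k-1) Q3"
    and Q3A3: "transpose_mat Q3 * A3 * Q3 = mat_diag (k-1) (\<lambda>j. es ! j)"
    using Cons.IH[OF A3 symA3] by blast
  define B where "B = four_block_mat (1\<^sub>m 1) (0\<^sub>m 1 (k-1)) (0\<^sub>m (k-1) 1) Q3"
  have A1: "mat 1 1 (\<lambda>_. e) \<in> carrier_mat 1 1" by simp
  note ext = orthogonal_block_extension[OF Q3 k0 A1 A3, folded B_def]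
  have "transpose_mat (W * B) * A * (W * B) = transpose_mat B * (transpose_mat W * A * W) * B"
    using W ext(1) A by (auto dest!: orthogonal_matD(1)
        simp: transpose_mult[of _ k k _ k] assoc_mult_mat[of _ k k _ k _ k])
  also have "\<dots> = mat_diag k (\<lambda>j. (e # es) ! j)"
    unfolding WAW ext(2) Q3A3 using k0 by (auto intro!: eq_matI simp: mat_diag_def)
  finally show ?case using orthogonal_mat_mult[OF W ext(1)] by blast
qed

section \<open>Rayleigh quotients and eigenvalue bounds\<close>

lemma orthogonal_diag_quadratic_form:
  fixes A Q :: "real mat"
  assumes A: "A \<in> carrier_mat k k" and Q: "orthogonal_mat k Q"
    and QAQ: "transpose_mat Q * A * Q = mat_diag k f" and y: "y \<in> carrier_vec k"
  shows "(Q *\<^sub>v y) \<bullet> (A *\<^sub>v (Q *\<^sub>v y)) = (\<Sum>j<k. f j * (y $ j)^2)"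
    and "(Q *\<^sub>v y) \<bullet> (Q *\<^sub>v y) = y \<bullet> y"
proof -
  have Qc: "Q \<in> carrier_mat k k" and QT: "transpose_mat Q \<in> carrier_mat k k"
    using Q by (auto dest: orthogonal_matD)
  have swap: "(Q *\<^sub>v y) \<bullet> w = y \<bullet> (transpose_mat Q *\<^sub>v w)" if "w \<in> carrier_vec k" for w
    using transpose_vec_mult_scalar[OF QT that y] Qc by simp
  have "transpose_mat Q *\<^sub>v (A *\<^sub>v (Q *\<^sub>v y)) = mat_diag k f *\<^sub>v y"
    unfolding QAQ[symmetric] using A Qc QT y by (simp add: assoc_mult_mat_vec[of _ k k _ k])
  also have "\<dots> = vec k (\<lambda>j. f j * y $ j)"
    using y by (intro eq_vecI)
      (auto simp: mat_diag_def scalar_prod_def if_distrib[of "\<lambda>t. t * _"] sum.delta cong: if_cong)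
  finally show "(Q *\<^sub>v y) \<bullet> (A *\<^sub>v (Q *\<^sub>v y)) = (\<Sum>j<k. f j * (y $ j)^2)"
    using swap[of "A *\<^sub>v (Q *\<^sub>v y)"] A Qc y
    by (simp add: scalar_prod_def power2_eq_square atLeast0LessThan ac_simps)
  have "transpose_mat Q *\<^sub>v (Q *\<^sub>v y) = y"
    using orthogonal_matD(2)[OF Q] Qc QT y by (simp add: assoc_mult_mat_vec[of _ k k _ k, symmetric])
  thus "(Q *\<^sub>v y) \<bullet> (Q *\<^sub>v y) = y \<bullet> y" using swap[of "Q *\<^sub>v y"] Qc y by simp
qed

lemma sorted_eigenvalues_rayleigh:
  fixes A :: "real mat"
  assumes A: "A \<in> carrier_mat k k" and es: "sorted_eigenvalues A es" and j: "j < k"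
  shows "\<exists>u\<in>carrier_vec k. u \<bullet> u = 1 \<and> u \<bullet> (A *\<^sub>v u) = es ! j"
proof -
  have cp: "char_poly A = (\<Prod>e\<leftarrow>es. [:- e, 1:])" using es by (simp add: sorted_eigenvalues_def)
  have "es ! j \<in> set es" using j length_eigenvalues[OF A cp] by simp
  hence "eigenvalue A (es ! j)"
    unfolding eigenvalue_root_char_poly[OF A] cp by (simp add: poly_prod_list_zero_iff)
  then obtain u where "u \<in> carrier_vec k" "u \<bullet> u = 1" "A *\<^sub>v u = es ! j \<cdot>\<^sub>v u"
    using eigenvalue_unit_eigenvector[OF A] by blast
  thus ?thesis by (intro bexI[of _ u]) auto
qed

lemma rayleigh_le_largest_eigenvalue:
  fixes A :: "real mat"
  assumes A: "A \<in> carrier_mat k k" and sym: "transpose_mat A = A"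
    and es: "sorted_eigenvalues A es" and x: "x \<in> carrier_vec k"
  shows "x \<bullet> (A *\<^sub>v x) \<le> es ! (k-1) * (x \<bullet> x)"
proof -
  have cp: "char_poly A = (\<Prod>e\<leftarrow>es. [:- e, 1:])" and srt: "sorted es"
    using es by (auto simp: sorted_eigenvalues_def)
  have len: "length es = k" by (rule length_eigenvalues[OF A cp])
  obtain Q where Q: "orthogonal_mat k Q" and QAQ: "transpose_mat Q * A * Q = mat_diag k (\<lambda>j. es ! j)"
    using symmetric_orthogonal_diagonalization[OF A sym cp] by blast
  have Qc: "Q \<in> carrier_mat k k" and QT: "transpose_mat Q \<in> carrier_mat k k"
    using Q by (auto dest: orthogonal_matD)
  define y where "y = transpose_mat Q *\<^sub>v x"
  have y: "y \<in> carrier_vec k" using QT x by (simp add: y_def)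
  have xy: "x = Q *\<^sub>v y" unfolding y_def using orthogonal_matD(3)[OF Q] Qc QT x
    by (simp add: assoc_mult_mat_vec[of _ k k _ k, symmetric])
  note form = orthogonal_diag_quadratic_form[OF A Q QAQ y]
  have "(\<Sum>j<k. es ! j * (y $ j)^2) \<le> (\<Sum>j<k. es ! (k-1) * (y $ j)^2)"
  proof (rule sum_mono)
    fix j assume "j \<in> {..<k}"
    hence "es ! j \<le> es ! (k-1)" using srt len by (intro sorted_nth_mono) auto
    thus "es ! j * (y $ j)^2 \<le> es ! (k-1) * (y $ j)^2" by (simp add: mult_right_mono)
  qed
  also have "\<dots> = es ! (k-1) * (y \<bullet> y)"
    using y by (simp add: scalar_prod_def sum_distrib_left power2_eq_square atLeast0LessThan)
  finally show ?thesis unfolding xy form .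
qed

lemma exists_orthogonal_rayleigh_ge_second_largest:
  fixes A :: "real mat"
  assumes A: "A \<in> carrier_mat k k" and sym: "transpose_mat A = A"
    and es: "sorted_eigenvalues A es" and k2: "2 \<le> k" and z: "z \<in> carrier_vec k"
  shows "\<exists>x\<in>carrier_vec k. 0 < x \<bullet> x \<and> z \<bullet> x = 0 \<and> es ! (k-2) * (x \<bullet> x) \<le> x \<bullet> (A *\<^sub>v x)"
proof -
  have cp: "char_poly A = (\<Prod>e\<leftarrow>es. [:- e, 1:])" and srt: "sorted es"
    using es by (auto simp: sorted_eigenvalues_def)
  have len: "length es = k" by (rule length_eigenvalues[OF A cp])
  obtain Q where Q: "orthogonal_mat k Q" and QAQ: "transpose_mat Q * A * Q = mat_diag k (\<lambda>j. es ! j)"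
    using symmetric_orthogonal_diagonalization[OF A sym cp] by blast
  have Qc: "Q \<in> carrier_mat k k" using Q by (rule orthogonal_matD)
  define c where "c = transpose_mat Q *\<^sub>v z"
  obtain \<alpha> \<beta> where ab: "\<alpha> * c $ (k-2) + \<beta> * c $ (k-1) = 0" and nz: "0 < \<alpha>^2 + \<beta>^2"
    by (rule exists_nontrivial_orthogonal_pair)
  define y where "y = vec k (\<lambda>j. if j = k-2 then \<alpha> else if j = k-1 then \<beta> else 0)"
  have y: "y \<in> carrier_vec k" by (simp add: y_def)
  have idx: "k-2 < k" "k-1 < k" "k-2 \<noteq> k-1" using k2 by auto
  note two = sum_two_support[OF idx]
  have yy: "y \<bullet> y = \<alpha>^2 + \<beta>^2"
    unfolding scalar_prod_def using idx
    by (simp add: y_def atLeast0LessThan two power2_eq_square)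
  have "z \<bullet> (Q *\<^sub>v y) = c \<bullet> y"
    unfolding c_def using transpose_vec_mult_scalar[OF Qc y z] by simp
  also have "\<dots> = 0"
    unfolding scalar_prod_def using idx ab by (simp add: y_def atLeast0LessThan two mult.commute)
  finally have zx: "z \<bullet> (Q *\<^sub>v y) = 0" .
  have "es ! (k-2) \<le> es ! (k-1)" using srt len k2 by (intro sorted_nth_mono) auto
  hence "es ! (k-2) * (\<alpha>^2 + \<beta>^2) \<le> es ! (k-2) * \<alpha>^2 + es ! (k-1) * \<beta>^2"
    by (simp add: algebra_simps mult_left_mono)
  also have "\<dots> = (\<Sum>j<k. es ! j * (y $ j)^2)"
    using idx by (simp add: y_def two)
  finally show ?thesis
    using zx nz y Qc orthogonal_diag_quadratic_form[OF A Q QAQ y] yy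
    by (intro bexI[of _ "Q *\<^sub>v y"]) auto
qed

lemma sorted_eigenvalues_lower_bounds:
  fixes A :: "real mat"
  assumes A: "A \<in> carrier_mat k k" and sym: "transpose_mat A = A"
    and es: "sorted_eigenvalues A es" and l: "0 \<le> l"
    and off: "\<forall>a<k. \<forall>b<k. a \<noteq> b \<longrightarrow> l \<le> A $$ (a,b)"
    and excess: "\<forall>a<k. c - (real k - 2) * l \<le> A $$ (a,a) - (\<Sum>b\<in>{..<k}-{a}. A $$ (a,b))"
  shows "\<forall>j<k. c \<le> es ! j" and "0 < k \<Longrightarrow> c + real k * l \<le> es ! (k-1)"
proof -
  have form: "c * (x \<bullet> x) + l * (\<Sum>a<k. x $ a)^2 \<le> x \<bullet> (A *\<^sub>v x)" if "x \<in> carrier_vec k" for x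
    using quadratic_form_lower_bound[OF A sym off excess that] by simp
  show "\<forall>j<k. c \<le> es ! j"
  proof (intro allI impI)
    fix j assume "j < k"
    then obtain u where u: "u \<in> carrier_vec k" "u \<bullet> u = 1" "u \<bullet> (A *\<^sub>v u) = es ! j"
      using sorted_eigenvalues_rayleigh[OF A es] by blast
    have "c + l * (\<Sum>a<k. u $ a)^2 \<le> es ! j" using form[OF u(1)] u(2,3) by simp
    moreover have "0 \<le> l * (\<Sum>a<k. u $ a)^2" using l by simp
    ultimately show "c \<le> es ! j" by linarith
  qed
  assume "0 < k"
  define ones where "ones = vec k (\<lambda>_. 1 :: real)"
  have ones: "ones \<in> carrier_vec k" and "ones \<bullet> ones = real k" and "(\<Sum>a<k. ones $ a) = real k"
    by (simp_all add: ones_def ones_scalar_prod)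
  hence "(c + real k * l) * real k \<le> es ! (k-1) * real k"
    using form[OF ones] rayleigh_le_largest_eigenvalue[OF A sym es ones]
    by (simp add: power2_eq_square algebra_simps)
  thus "c + real k * l \<le> es ! (k-1)" using \<open>0 < k\<close> by simp
qed

lemma sorted_eigenvalues_upper_bounds:
  fixes A :: "real mat"
  assumes A: "A \<in> carrier_mat k k" and sym: "transpose_mat A = A"
    and es: "sorted_eigenvalues A es" and m: "0 \<le> m"
    and off: "\<forall>a<k. \<forall>b<k. a \<noteq> b \<longrightarrow> A $$ (a,b) \<le> m"
    and excess: "\<forall>a<k. A $$ (a,a) - (\<Sum>b\<in>{..<k}-{a}. A $$ (a,b)) \<le> c - (real k - 2) * m"
  shows "\<forall>j. j + 2 \<le> k \<longrightarrow> es ! j \<le> c" and "0 < k \<Longrightarrow> es ! (k-1) \<le> c + real k * m"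
proof -
  have form: "x \<bullet> (A *\<^sub>v x) \<le> c * (x \<bullet> x) + m * (\<Sum>a<k. x $ a)^2" if "x \<in> carrier_vec k" for x
    using quadratic_form_upper_bound[OF A sym off excess that] by simp
  have srt: "sorted es" and len: "length es = k"
    using es length_eigenvalues[OF A] by (auto simp: sorted_eigenvalues_def)
  show "\<forall>j. j + 2 \<le> k \<longrightarrow> es ! j \<le> c"
  proof (intro allI impI)
    fix j assume j: "j + 2 \<le> k"
    define ones where "ones = vec k (\<lambda>_. 1 :: real)"
    obtain x where x: "x \<in> carrier_vec k" "0 < x \<bullet> x" "ones \<bullet> x = 0"
      and lower: "es ! (k-2) * (x \<bullet> x) \<le> x \<bullet> (A *\<^sub>v x)"
      using exists_orthogonal_rayleigh_ge_second_largest[OF A sym es _, of ones] j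
      by (auto simp: ones_def)
    have "(\<Sum>a<k. x $ a) = 0" using x(3) ones_scalar_prod[OF x(1)] by (simp add: ones_def)
    hence "x \<bullet> (A *\<^sub>v x) \<le> c * (x \<bullet> x)" using form[OF x(1)] by simp
    hence "es ! (k-2) * (x \<bullet> x) \<le> c * (x \<bullet> x)" using lower by simp
    hence "es ! (k-2) \<le> c" using x(2) by simp
    moreover have "es ! j \<le> es ! (k-2)" using srt len j by (intro sorted_nth_mono) auto
    ultimately show "es ! j \<le> c" by simp
  qed
  assume "0 < k"
  then obtain u where u: "u \<in> carrier_vec k" "u \<bullet> u = 1" "u \<bullet> (A *\<^sub>v u) = es ! (k-1)"
    using sorted_eigenvalues_rayleigh[OF A es, of "k-1"] by auto
  have "(\<Sum>a<k. u $ a)^2 \<le> real k"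
    using square_sum_le_card_times_sum_squares[of "\<lambda>a. u $ a" k] u(1,2)
    by (simp add: scalar_prod_def atLeast0LessThan power2_eq_square)
  hence "m * (\<Sum>a<k. u $ a)^2 \<le> m * real k" using m by (rule mult_left_mono)
  thus "es ! (k-1) \<le> c + real k * m" using form[OF u(1)] u(2,3) by (simp add: algebra_simps)
qed

section \<open>Lower-right principal submatrices\<close>

lemma lower_right_carrier: "J \<in> carrier_mat n n \<Longrightarrow> lower_right J i \<in> carrier_mat (n-i+1) (n-i+1)"
  by (simp add: lower_right_def)

lemma lower_right_index:
  "J \<in> carrier_mat n n \<Longrightarrow> a < n-i+1 \<Longrightarrow> b < n-i+1 \<Longrightarrow>
    lower_right J i $$ (a,b) = J $$ (a+i-1, b+i-1)"
  by (simp add: lower_right_def)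

lemma lower_right_symmetric:
  assumes J: "J \<in> carrier_mat n n" and sym: "transpose_mat J = J" and i: "1 \<le> i" "i \<le> n"
  shows "transpose_mat (lower_right J i) = lower_right J i"
proof (rule eq_matI)
  fix a b assume "a < dim_row (lower_right J i)" "b < dim_col (lower_right J i)"
  hence ab: "a < n-i+1" "b < n-i+1" using J by (auto simp: lower_right_def)
  hence "J $$ (b+i-1, a+i-1) = transpose_mat J $$ (a+i-1, b+i-1)" using J i by simp
  thus "transpose_mat (lower_right J i) $$ (a,b) = lower_right J i $$ (a,b)"
    using ab J sym by (simp add: lower_right_index lower_right_def)
qed (use J in \<open>auto simp: lower_right_def\<close>)

lemma lower_right_row_excess:
  fixes J :: "real mat"
  assumes J: "J \<in> carrier_mat n n" and i: "1 \<le> i" "i \<le> n" and a: "a < n-i+1"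
  defines "p \<equiv> a + i - 1"
  shows "lower_right J i $$ (a,a) - (\<Sum>b\<in>{..<n-i+1}-{a}. lower_right J i $$ (a,b))
    = J $$ (p,p) - (\<Sum>q\<in>{..<n}-{p}. J $$ (p,q)) + (\<Sum>q<i-1. J $$ (p,q))"
proof -
  have "(\<Sum>b\<in>{..<n-i+1}-{a}. lower_right J i $$ (a,b)) = (\<Sum>b\<in>{..<n-i+1}-{a}. J $$ (p, b+(i-1)))"
    using J a i by (intro sum.cong refl) (auto simp: lower_right_index p_def)
  also have "\<dots> = (\<Sum>q\<in>{i-1..<n}-{p}. J $$ (p,q))"
  proof (rule sum.reindex_bij_witness[of _ "\<lambda>q. q - (i-1)" "\<lambda>b. b + (i-1)"])
  qed (use a i in \<open>auto simp: p_def\<close>)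
  also have "\<dots> = (\<Sum>q\<in>{..<n}-{p}. J $$ (p,q)) - (\<Sum>q<i-1. J $$ (p,q))"
  proof -
    have "{..<n}-{p} = ({i-1..<n}-{p}) \<union> {..<i-1}" and "({i-1..<n}-{p}) \<inter> {..<i-1} = {}"
      using a i by (auto simp: p_def)
    thus ?thesis by (simp add: sum.union_disjoint)
  qed
  finally show ?thesis using J a i by (simp add: lower_right_index p_def)
qed

lemma row_excess_of_nonneg_row:
  fixes J :: "real mat"
  assumes "J \<in> carrier_mat n n" and "p < n" and "\<forall>q<n. 0 \<le> J $$ (p,q)"
  shows "row_excess J p = J $$ (p,p) - (\<Sum>q\<in>{..<n}-{p}. J $$ (p,q))"
  using assms by (auto simp: row_excess_def atLeast0LessThan)

lemma lower_right_lower_bounds: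
  fixes J :: "real mat"
  assumes J: "J \<in> carrier_mat n n" and sym: "transpose_mat J = J" and l: "0 \<le> l"
    and off: "\<forall>p<n. \<forall>q<n. p \<noteq> q \<longrightarrow> l \<le> J $$ (p,q)" and diag: "\<forall>p<n. 0 \<le> J $$ (p,p)"
    and dom: "diag_dominant J" and i: "1 \<le> i" "i \<le> n"
    and es: "sorted_eigenvalues (lower_right J i) es"
  shows "\<forall>j\<le>n-i. (real n - 2) * l \<le> es ! j" and "(2 * real n - real i - 1) * l \<le> es ! (n-i)"
proof -
  let ?k = "n-i+1" and ?A = "lower_right J i"
  have A: "?A \<in> carrier_mat ?k ?k" using J by (rule lower_right_carrier)
  have offA: "\<forall>a<?k. \<forall>b<?k. a \<noteq> b \<longrightarrow> l \<le> ?A $$ (a,b)"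
    using J off i by (auto simp: lower_right_index)
  have excess: "\<forall>a<?k. (real n - 2) * l - (real ?k - 2) * l
      \<le> ?A $$ (a,a) - (\<Sum>b\<in>{..<?k}-{a}. ?A $$ (a,b))"
  proof (intro allI impI)
    fix a assume a: "a < ?k"
    define p where "p = a + i - 1"
    have p: "p < n" using a i by (simp add: p_def)
    have "\<forall>q<n. 0 \<le> J $$ (p,q)" using off diag l p by (metis order_trans)
    hence "row_excess J p = J $$ (p,p) - (\<Sum>q\<in>{..<n}-{p}. J $$ (p,q))"
      by (rule row_excess_of_nonneg_row[OF J p])
    moreover have "0 \<le> row_excess J p" using dom p J by (simp add: diag_dominant_def)
    moreover have "real (i-1) * l \<le> (\<Sum>q<i-1. J $$ (p,q))"
      using sum_bounded_below[of "{..<i-1}" l "\<lambda>q. J $$ (p,q)"] off p by (simp add: p_def)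
    ultimately show "(real n - 2) * l - (real ?k - 2) * l
        \<le> ?A $$ (a,a) - (\<Sum>b\<in>{..<?k}-{a}. ?A $$ (a,b))"
      unfolding lower_right_row_excess[OF J i a, folded p_def] using i
      by (simp add: of_nat_diff algebra_simps)
  qed
  note bounds = sorted_eigenvalues_lower_bounds[OF A lower_right_symmetric[OF J sym i] es l offA excess]
  show "\<forall>j\<le>n-i. (real n - 2) * l \<le> es ! j" using bounds(1) by auto
  show "(2 * real n - real i - 1) * l \<le> es ! (n-i)"
    using bounds(2) i by (simp add: of_nat_diff algebra_simps)
qed

lemma lower_right_upper_bounds:
  fixes J :: "real mat"
  assumes J: "J \<in> carrier_mat n n" and sym: "transpose_mat J = J" and m: "0 \<le> m"
    and off: "\<forall>p<n. \<forall>q<n. p \<noteq> q \<longrightarrow> 0 \<le> J $$ (p,q) \<and> J $$ (p,q) \<le> m"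
    and diag: "\<forall>p<n. 0 \<le> J $$ (p,p)"
    and bal: "diag_balanced J" and i: "1 \<le> i" "i \<le> n"
    and es: "sorted_eigenvalues (lower_right J i) es"
  shows "\<forall>j<n-i. es ! j \<le> (real n - 2) * m" and "es ! (n-i) \<le> (2 * real n - real i - 1) * m"
proof -
  let ?k = "n-i+1" and ?A = "lower_right J i"
  have A: "?A \<in> carrier_mat ?k ?k" using J by (rule lower_right_carrier)
  have offA: "\<forall>a<?k. \<forall>b<?k. a \<noteq> b \<longrightarrow> ?A $$ (a,b) \<le> m"
    using J off i by (auto simp: lower_right_index)
  have excess: "\<forall>a<?k. ?A $$ (a,a) - (\<Sum>b\<in>{..<?k}-{a}. ?A $$ (a,b))
      \<le> (real n - 2) * m - (real ?k - 2) * m"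
  proof (intro allI impI)
    fix a assume a: "a < ?k"
    define p where "p = a + i - 1"
    have p: "p < n" using a i by (simp add: p_def)
    have "\<forall>q<n. 0 \<le> J $$ (p,q)" using off diag p by metis
    hence "row_excess J p = J $$ (p,p) - (\<Sum>q\<in>{..<n}-{p}. J $$ (p,q))"
      by (rule row_excess_of_nonneg_row[OF J p])
    moreover have "row_excess J p = 0" using bal p J by (simp add: diag_balanced_def)
    moreover have "(\<Sum>q<i-1. J $$ (p,q)) \<le> real (i-1) * m"
      using sum_bounded_above[of "{..<i-1}" "\<lambda>q. J $$ (p,q)" m] off p by (simp add: p_def)
    ultimately show "?A $$ (a,a) - (\<Sum>b\<in>{..<?k}-{a}. ?A $$ (a,b))
        \<le> (real n - 2) * m - (real ?k - 2) * m"
      unfolding lower_right_row_excess[OF J i a, folded p_def] using i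
      by (simp add: of_nat_diff algebra_simps)
  qed
  note bounds = sorted_eigenvalues_upper_bounds[OF A lower_right_symmetric[OF J sym i] es m offA excess]
  show "\<forall>j<n-i. es ! j \<le> (real n - 2) * m" using bounds(1) i by auto
  show "es ! (n-i) \<le> (2 * real n - real i - 1) * m"
    using bounds(2) i by (simp add: of_nat_diff algebra_simps)
qed

theorem lemma7p2:
  fixes J :: "real mat" and n :: nat and l m :: real
  assumes "J \<in> carrier_mat n n"
    and "n \<ge> 3"
    and "0 < l" and "l \<le> m"
    and "transpose_mat J = J"
    and "\<forall>i<n. \<forall>j<n. i \<noteq> j \<longrightarrow> l \<le> J $$ (i,j) \<and> J $$ (i,j) \<le> m"
    and "\<forall>i<n. J $$ (i,i) \<ge> 0"
  shows "(diag_balanced J \<longrightarrow>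
           (\<forall>i\<in>{1..n}. \<forall>es. sorted_eigenvalues (lower_right J i) es \<longrightarrow>
              (\<forall>j\<in>{1..n-i}. (real n - 2) * l \<le> es ! (j-1) \<and> es ! (j-1) \<le> (real n - 2) * m) \<and>
              (2 * real n - real i - 1) * l \<le> es ! (n-i) \<and> es ! (n-i) \<le> (2 * real n - real i - 1) * m))
       \<and> (diag_dominant J \<longrightarrow>
           (\<forall>i\<in>{1..n}. \<forall>es. sorted_eigenvalues (lower_right J i) es \<longrightarrow>
              (\<forall>j\<in>{1..n-i}. (real n - 2) * l \<le> es ! (j-1)) \<and>
              (2 * real n - real i - 1) * l \<le> es ! (n-i)))"
proof -
  note J = assms(1) and sym = assms(5) and diag = assms(7)
  have l: "0 \<le> l" and m: "0 \<le> m" using assms(3,4) by simp_all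
  have off_l: "\<forall>p<n. \<forall>q<n. p \<noteq> q \<longrightarrow> l \<le> J $$ (p,q)"
    and off_m: "\<forall>p<n. \<forall>q<n. p \<noteq> q \<longrightarrow> 0 \<le> J $$ (p,q) \<and> J $$ (p,q) \<le> m"
    using assms(6) l by (meson order_trans)+
  have balanced_dominant: "diag_balanced J \<Longrightarrow> diag_dominant J"
    by (simp add: diag_balanced_def diag_dominant_def)
  note lower = lower_right_lower_bounds[OF J sym l off_l diag]
  note upper = lower_right_upper_bounds[OF J sym m off_m diag]
  have dominant_bounds: "(\<forall>j\<in>{1..n-i}. (real n - 2) * l \<le> es ! (j-1)) \<and>
      (2 * real n - real i - 1) * l \<le> es ! (n-i)"
    if "diag_dominant J" "i \<in> {1..n}" "sorted_eigenvalues (lower_right J i) es" for i es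
    using lower[OF that(1) _ _ that(3)] that(2) by auto
  have balanced_bounds: "(\<forall>j\<in>{1..n-i}. es ! (j-1) \<le> (real n - 2) * m) \<and>
      es ! (n-i) \<le> (2 * real n - real i - 1) * m"
    if "diag_balanced J" "i \<in> {1..n}" "sorted_eigenvalues (lower_right J i) es" for i es
    using upper[OF that(1) _ _ that(3)] that(2) by auto
  show ?thesis using dominant_bounds balanced_bounds balanced_dominant by blast
qed
end
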